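(* Let $\mathcal H_S,\mathcal H_E$ be finite-dimensional complex Hilbert spaces, $\Psi\in\mathcal H_S\otimes\mathcal H_E$ a unit vector, and $\{\phi_j\}_{j\in\mathcal I}$ a finite family of unit vectors in $\mathcal H_S$ such that $\Psi\in\mathrm{span}\{\phi_j\}\otimes\mathcal H_E$ (equivalently, $\rho_S=\mathrm{Tr}_E|\Psi\rangle\langle\Psi|$ is described by the $\phi_j$). Suppose $\Pr(\phi_j)>0$ for all $j$ and that the $\{\phi_j\}$ are indistinguishable relative to $E$. Then $\Psi=\Psi_S\otimes\Lambda$ for unit vectors $\Psi_S\in\mathrm{span}\{\phi_j\}$, $\Lambda\in\mathcal H_E$; in particular $\rho_S=|\Psi_S\rangle\langle\Psi_S|$ is pure, with $\Psi_S=\sum_{s\in\mathcal I}\psi_s\phi_s$ for some coefficients $\psi_s$.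
   Context: For the pure joint state $\Psi$ and unit vectors $\phi\in\mathcal H_S$, $\eta\in\mathcal H_E$: $\Pr(\phi)=\langle\phi|\rho_S|\phi\rangle$ with $\rho_S=\mathrm{Tr}_E|\Psi\rangle\langle\Psi|$, $\Pr(\phi\wedge\eta)=|\langle\phi\otimes\eta|\Psi\rangle|^2$, and $\Pr(\eta\mid\phi)=\Pr(\phi\wedge\eta)/\Pr(\phi)$. The state of $S$ is "described by" $\{\phi_j\}$ iff $\rho_S=\sum_{t,t'}w_{tt'}|\phi_t\rangle\langle\phi_{t'}|$ for some coefficients $w_{tt'}$. Values $\{\phi_j\}$ are indistinguishable relative to $E$ iff $\Pr(\eta\mid\phi_j)$ is independent of $j$ for every unit vector $\eta\in\mathcal H_E$. *)

theory Defs
  imports Complex_Main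
begin

text \<open>Finite-dimensional Hilbert spaces H_S, H_E are modelled as coordinate spaces
  'a \<Rightarrow> complex and 'b \<Rightarrow> complex over finite index types; the tensor product
  H_S \<otimes> H_E is ('a \<times> 'b) \<Rightarrow> complex.\<close>

definition cinner :: "('a::finite \<Rightarrow> complex) \<Rightarrow> ('a \<Rightarrow> complex) \<Rightarrow> complex" where
  "cinner x y = (\<Sum>i\<in>UNIV. cnj (x i) * y i)"

definition unit_vec :: "('a::finite \<Rightarrow> complex) \<Rightarrow> bool" where
  "unit_vec x \<longleftrightarrow> cinner x x = 1"

definition tensor :: "('a \<Rightarrow> complex) \<Rightarrow> ('b \<Rightarrow> complex) \<Rightarrow> ('a \<times> 'b \<Rightarrow> complex)" where
  "tensor \<phi> \<eta> = (\<lambda>(i, k). \<phi> i * \<eta> k)"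

definition ketbra :: "('a \<Rightarrow> complex) \<Rightarrow> ('a \<Rightarrow> complex) \<Rightarrow> 'a \<Rightarrow> 'a \<Rightarrow> complex" where
  "ketbra x y = (\<lambda>i i'. x i * cnj (y i'))"

definition rho_S :: "('a \<times> 'b::finite \<Rightarrow> complex) \<Rightarrow> 'a \<Rightarrow> 'a \<Rightarrow> complex" where
  "rho_S \<Psi> = (\<lambda>i i'. \<Sum>k\<in>UNIV. \<Psi> (i, k) * cnj (\<Psi> (i', k)))"

definition Pr :: "('a::finite \<times> 'b::finite \<Rightarrow> complex) \<Rightarrow> ('a \<Rightarrow> complex) \<Rightarrow> real" where
  "Pr \<Psi> \<phi> = Re (\<Sum>i\<in>UNIV. \<Sum>i'\<in>UNIV. cnj (\<phi> i) * rho_S \<Psi> i i' * \<phi> i')"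

definition Pr_joint :: "('a::finite \<times> 'b::finite \<Rightarrow> complex) \<Rightarrow> ('a \<Rightarrow> complex) \<Rightarrow> ('b \<Rightarrow> complex) \<Rightarrow> real" where
  "Pr_joint \<Psi> \<phi> \<eta> = (cmod (cinner (tensor \<phi> \<eta>) \<Psi>))\<^sup>2"

definition Pr_cond :: "('a::finite \<times> 'b::finite \<Rightarrow> complex) \<Rightarrow> ('b \<Rightarrow> complex) \<Rightarrow> ('a \<Rightarrow> complex) \<Rightarrow> real" where
  "Pr_cond \<Psi> \<eta> \<phi> = Pr_joint \<Psi> \<phi> \<eta> / Pr \<Psi> \<phi>"

definition indistinguishable :: "('a::finite \<times> 'b::finite \<Rightarrow> complex) \<Rightarrow> 'i set \<Rightarrow> ('i \<Rightarrow> 'a \<Rightarrow> complex) \<Rightarrow> bool" where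
  "indistinguishable \<Psi> I \<phi> \<longleftrightarrow>
     (\<forall>\<eta>::'b \<Rightarrow> complex. unit_vec \<eta> \<longrightarrow>
        (\<forall>j\<in>I. \<forall>j'\<in>I. Pr_cond \<Psi> \<eta> (\<phi> j) = Pr_cond \<Psi> \<eta> (\<phi> j')))"

end

theory Submission
  imports Defs
begin

(* Let v_j = (<\<phi>_j| \<otimes> 1) \<Psi> be the relative state of E given \<phi>_j. Then Pr(\<phi>_j) = |v_j|^2
   and Pr(\<phi>_j \<and> \<eta>) = |<\<eta>, v_j>|^2, so indistinguishability says that |<\<eta>, v_j>|^2 / |v_j|^2
   does not depend on j: every \<eta> orthogonal to one v_j0 is orthogonal to all of them. For
   such \<eta> the vector (1 \<otimes> <\<eta>|) \<Psi> lies in span {\<phi>_j} and is orthogonal to every \<phi>_j, hence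
   vanishes. So \<Psi> is annihilated by everything orthogonal to \<Lambda> = v_j0 / |v_j0|, which
   forces \<Psi> = \<Psi>_S \<otimes> \<Lambda> with \<Psi>_S = (1 \<otimes> <\<Lambda>|) \<Psi>. *)

lemma cinner_self_eq_sum_norm: "cinner x x = of_real (\<Sum>i\<in>UNIV. (cmod (x i))\<^sup>2)"
  unfolding cinner_def of_real_sum complex_norm_square by (simp add: mult.commute)

lemma cinner_self_of_real: "cinner x x = of_real (Re (cinner x x))"
  by (simp add: cinner_self_eq_sum_norm)

lemma cinner_self_eq_0_iff: "cinner x x = 0 \<longleftrightarrow> x = (\<lambda>_. 0)"
  unfolding cinner_self_eq_sum_norm of_real_eq_0_iff
  by (subst sum_nonneg_eq_0_iff) (auto simp: fun_eq_iff)

lemma Re_cinner_self_nonneg: "Re (cinner x x) \<ge> 0"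
  unfolding cinner_self_eq_sum_norm Re_complex_of_real by (simp add: sum_nonneg)

lemma Re_cinner_self_pos: "x \<noteq> (\<lambda>_. 0) \<Longrightarrow> Re (cinner x x) > 0"
  using cinner_self_eq_0_iff[of x] cinner_self_of_real[of x] Re_cinner_self_nonneg[of x]
  by force

lemma cnj_cinner: "cnj (cinner x y) = cinner y x"
  by (simp add: cinner_def mult.commute)

lemma cinner_scale_left: "cinner (\<lambda>i. c * x i) y = cnj c * cinner x y"
  by (simp add: cinner_def sum_distrib_left mult.assoc)

lemma cinner_scale_right: "cinner x (\<lambda>i. c * y i) = c * cinner x y"
  by (simp add: cinner_def sum_distrib_left algebra_simps)

lemma cinner_diff_right: "cinner x (\<lambda>i. y i - z i) = cinner x y - cinner x z"
  by (simp add: cinner_def sum_subtractf right_diff_distrib)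

lemma cinner_sum_left: "cinner (\<lambda>i. \<Sum>j\<in>J. f j i) y = (\<Sum>j\<in>J. cinner (f j) y)"
  unfolding cinner_def cnj_sum by (simp add: sum_distrib_right sum.swap[of _ UNIV])

lemma cinner_sum_right: "cinner x (\<lambda>i. \<Sum>j\<in>J. f j i) = (\<Sum>j\<in>J. cinner x (f j))"
  unfolding cinner_def by (simp add: sum_distrib_left sum.swap[of _ UNIV])

definition cnormalize :: "('a::finite \<Rightarrow> complex) \<Rightarrow> 'a \<Rightarrow> complex" where
  "cnormalize x = (\<lambda>i. of_real (1 / sqrt (Re (cinner x x))) * x i)"

lemma unit_vec_cnormalize:
  assumes "x \<noteq> (\<lambda>_. 0)"
  shows "unit_vec (cnormalize x)"
proof -
  define r where "r = Re (cinner x x)"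
  define c where "c = 1 / sqrt r"
  have "r > 0" unfolding r_def using assms by (rule Re_cinner_self_pos)
  have "cnormalize x = (\<lambda>i. of_real c * x i)"
    unfolding cnormalize_def c_def r_def ..
  then have "cinner (cnormalize x) (cnormalize x) = of_real c * of_real c * cinner x x"
    by (simp add: cinner_scale_left cinner_scale_right)
  also have "cinner x x = of_real r"
    unfolding r_def by (rule cinner_self_of_real)
  also have "of_real c * of_real c * of_real r = (1 :: complex)"
    using \<open>r > 0\<close> unfolding c_def by (simp flip: of_real_mult)
  finally show ?thesis unfolding unit_vec_def .
qed

lemma cinner_cnormalize_left_eq_0_iff:
  "x \<noteq> (\<lambda>_. 0) \<Longrightarrow> cinner (cnormalize x) y = 0 \<longleftrightarrow> cinner x y = 0"
  using Re_cinner_self_pos[of x]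
  unfolding cnormalize_def cinner_scale_left complex_cnj_complex_of_real by simp

lemma cinner_cnormalize_right_eq_0_iff:
  "y \<noteq> (\<lambda>_. 0) \<Longrightarrow> cinner x (cnormalize y) = 0 \<longleftrightarrow> cinner x y = 0"
  using Re_cinner_self_pos[of y] unfolding cnormalize_def cinner_scale_right by simp

lemma eq_projection_onto_unit_vec:
  assumes "unit_vec \<Lambda>" and "\<forall>\<eta>. cinner \<eta> \<Lambda> = 0 \<longrightarrow> cinner \<eta> y = 0"
  shows "y = (\<lambda>k. cinner \<Lambda> y * \<Lambda> k)"
proof -
  define w where "w = (\<lambda>k. y k - cinner \<Lambda> y * \<Lambda> k)"
  have "cinner w \<Lambda> = cnj (cinner \<Lambda> w)"
    by (simp only: cnj_cinner)
  also have "\<dots> = cnj (cinner \<Lambda> y - cinner \<Lambda> y * cinner \<Lambda> \<Lambda>)"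
    unfolding w_def cinner_diff_right cinner_scale_right ..
  finally have w_orth: "cinner w \<Lambda> = 0"
    using assms(1) by (simp add: unit_vec_def)
  have "cinner w w = cinner w y - cinner \<Lambda> y * cinner w \<Lambda>"
    by (subst (2) w_def) (simp only: cinner_diff_right cinner_scale_right)
  also have "\<dots> = 0"
    using w_orth assms(2) by simp
  finally have "w = (\<lambda>_. 0)" unfolding cinner_self_eq_0_iff .
  then show ?thesis unfolding w_def by (metis eq_iff_diff_eq_0)
qed

lemma eq_0_if_in_span_orthogonal:
  assumes "z = (\<lambda>i. \<Sum>j\<in>J. c j * \<phi> j i)" and "\<forall>j\<in>J. cinner (\<phi> j) z = 0"
  shows "z = (\<lambda>_. 0)"
proof -
  have "cinner z z = (\<Sum>j\<in>J. cnj (c j) * cinner (\<phi> j) z)"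
    by (subst (1) assms(1)) (simp only: cinner_sum_left cinner_scale_left)
  also have "\<dots> = 0"
    using assms(2) by simp
  finally show ?thesis unfolding cinner_self_eq_0_iff .
qed

lemma sum_UNIV_prod: "(\<Sum>x\<in>UNIV. h x) = (\<Sum>i\<in>UNIV. \<Sum>k\<in>UNIV. h (i, k))"
  by (simp add: sum.cartesian_product)

lemma cinner_tensor_tensor: "cinner (tensor \<phi> \<eta>) (tensor \<phi>' \<eta>') = cinner \<phi> \<phi>' * cinner \<eta> \<eta>'"
  unfolding cinner_def sum_UNIV_prod
  by (simp add: tensor_def sum_product algebra_simps)

lemma unit_vec_tensor_iff: "unit_vec \<eta> \<Longrightarrow> unit_vec (tensor \<phi> \<eta>) \<longleftrightarrow> unit_vec \<phi>"
  by (simp add: unit_vec_def cinner_tensor_tensor)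

lemma rho_S_tensor:
  assumes "unit_vec \<eta>"
  shows "rho_S (tensor \<phi> \<eta>) = ketbra \<phi> \<phi>"
proof -
  have "rho_S (tensor \<phi> \<eta>) = (\<lambda>i i'. \<phi> i * cnj (\<phi> i') * cinner \<eta> \<eta>)"
    unfolding rho_S_def tensor_def cinner_def
    by (simp add: sum_distrib_left mult.commute mult.left_commute)
  with assms show ?thesis
    unfolding unit_vec_def ketbra_def by simp
qed

definition contract_S :: "('a::finite \<Rightarrow> complex) \<Rightarrow> ('a \<times> 'b::finite \<Rightarrow> complex) \<Rightarrow> 'b \<Rightarrow> complex" where
  "contract_S \<phi> \<Psi> = (\<lambda>k. cinner \<phi> (\<lambda>i. \<Psi> (i, k)))"

definition contract_E :: "('b::finite \<Rightarrow> complex) \<Rightarrow> ('a::finite \<times> 'b \<Rightarrow> complex) \<Rightarrow> 'a \<Rightarrow> complex" where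
  "contract_E \<eta> \<Psi> = (\<lambda>i. cinner \<eta> (\<lambda>k. \<Psi> (i, k)))"

lemma cinner_tensor_eq_cinner_contract_E:
  "cinner (tensor \<phi> \<eta>) \<Psi> = cinner \<phi> (contract_E \<eta> \<Psi>)"
  unfolding cinner_def contract_E_def sum_UNIV_prod
  by (simp add: tensor_def sum_distrib_left mult_ac)

lemma cinner_tensor_eq_cinner_contract_S:
  "cinner (tensor \<phi> \<eta>) \<Psi> = cinner \<eta> (contract_S \<phi> \<Psi>)"
proof -
  have "cinner (tensor \<phi> \<eta>) \<Psi> = (\<Sum>i\<in>UNIV. \<Sum>k\<in>UNIV. cnj (\<eta> k) * (cnj (\<phi> i) * \<Psi> (i, k)))"
    unfolding cinner_def sum_UNIV_prod
    by (simp add: tensor_def mult_ac)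
  also have "\<dots> = (\<Sum>k\<in>UNIV. \<Sum>i\<in>UNIV. cnj (\<eta> k) * (cnj (\<phi> i) * \<Psi> (i, k)))"
    by (rule sum.swap)
  also have "\<dots> = cinner \<eta> (contract_S \<phi> \<Psi>)"
    unfolding cinner_def contract_S_def by (simp add: sum_distrib_left)
  finally show ?thesis .
qed

lemma Pr_joint_eq_cinner_contract_S:
  "Pr_joint \<Psi> \<phi> \<eta> = (cmod (cinner \<eta> (contract_S \<phi> \<Psi>)))\<^sup>2"
  unfolding Pr_joint_def cinner_tensor_eq_cinner_contract_S ..

lemma Pr_eq_cinner_contract_S: "Pr \<Psi> \<phi> = Re (cinner (contract_S \<phi> \<Psi>) (contract_S \<phi> \<Psi>))"
proof -
  define X where "X i k = cnj (\<phi> i) * \<Psi> (i, k)" for i k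
  have "(\<Sum>i\<in>UNIV. \<Sum>i'\<in>UNIV. cnj (\<phi> i) * rho_S \<Psi> i i' * \<phi> i') =
        (\<Sum>i\<in>UNIV. \<Sum>i'\<in>UNIV. \<Sum>k\<in>UNIV. X i k * cnj (X i' k))"
    unfolding rho_S_def X_def by (simp add: sum_distrib_left sum_distrib_right mult_ac)
  also have "\<dots> = (\<Sum>i\<in>UNIV. \<Sum>k\<in>UNIV. \<Sum>i'\<in>UNIV. X i k * cnj (X i' k))"
    by (intro sum.cong refl sum.swap)
  also have "\<dots> = (\<Sum>k\<in>UNIV. \<Sum>i\<in>UNIV. \<Sum>i'\<in>UNIV. X i k * cnj (X i' k))"
    by (rule sum.swap)
  also have "\<dots> = (\<Sum>k\<in>UNIV. (\<Sum>i\<in>UNIV. X i k) * cnj (\<Sum>i'\<in>UNIV. X i' k))"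
    by (simp add: sum_product cnj_sum)
  also have "\<dots> = cinner (contract_S \<phi> \<Psi>) (contract_S \<phi> \<Psi>)"
    unfolding cinner_def contract_S_def X_def by (simp add: mult.commute)
  finally show ?thesis unfolding Pr_def by simp
qed

lemma contract_E_sum_tensor:
  "contract_E \<eta> (\<lambda>x. \<Sum>j\<in>J. tensor (\<phi> j) (\<chi> j) x) = (\<lambda>i. \<Sum>j\<in>J. cinner \<eta> (\<chi> j) * \<phi> j i)"
  unfolding contract_E_def tensor_def
  by (simp add: cinner_sum_right cinner_scale_right) (simp add: mult.commute)

lemma tensor_contract_E_if_orthogonal:
  fixes \<Psi> :: "'a::finite \<times> 'b::finite \<Rightarrow> complex"
  assumes "unit_vec \<Lambda>" and "\<forall>\<eta>. cinner \<eta> \<Lambda> = 0 \<longrightarrow> contract_E \<eta> \<Psi> = (\<lambda>_. 0)"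
  shows "\<Psi> = tensor (contract_E \<Lambda> \<Psi>) \<Lambda>"
proof
  fix x :: "'a \<times> 'b"
  obtain i k where x: "x = (i, k)" by fastforce
  have "(\<lambda>k. \<Psi> (i, k)) = (\<lambda>k. contract_E \<Lambda> \<Psi> i * \<Lambda> k)"
    unfolding contract_E_def
  proof (rule eq_projection_onto_unit_vec[OF assms(1)], intro allI impI)
    fix \<eta> assume "cinner \<eta> \<Lambda> = 0"
    then have "contract_E \<eta> \<Psi> i = 0" using assms(2) by simp
    then show "cinner \<eta> (\<lambda>k. \<Psi> (i, k)) = 0" unfolding contract_E_def .
  qed
  then show "\<Psi> x = tensor (contract_E \<Lambda> \<Psi>) \<Lambda> x"
    unfolding x tensor_def by (simp add: fun_eq_iff)
qed

lemma indistinguishable_orthogonal_contract_S: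
  assumes "indistinguishable \<Psi> I \<phi>" and "j0 \<in> I" and "j \<in> I" and "Pr \<Psi> (\<phi> j) \<noteq> 0"
    and "cinner \<eta> (contract_S (\<phi> j0) \<Psi>) = 0"
  shows "cinner \<eta> (contract_S (\<phi> j) \<Psi>) = 0"
proof (cases "\<eta> = (\<lambda>_. 0)")
  case True
  then show ?thesis by (simp add: cinner_def)
next
  case False
  have "Pr_cond \<Psi> (cnormalize \<eta>) (\<phi> j) = Pr_cond \<Psi> (cnormalize \<eta>) (\<phi> j0)"
    using assms(1-3) unit_vec_cnormalize[OF False] unfolding indistinguishable_def by blast
  also have "\<dots> = 0"
    using assms(5) False
    by (simp add: Pr_cond_def Pr_joint_eq_cinner_contract_S cinner_cnormalize_left_eq_0_iff)
  finally have "cinner (cnormalize \<eta>) (contract_S (\<phi> j) \<Psi>) = 0"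
    using assms(4) by (simp add: Pr_cond_def Pr_joint_eq_cinner_contract_S)
  then show ?thesis
    using False cinner_cnormalize_left_eq_0_iff by blast
qed

lemma contract_E_eq_0_if_orthogonal_contract_S:
  assumes "\<Psi> = (\<lambda>x. \<Sum>j\<in>I. tensor (\<phi> j) (\<chi> j) x)"
    and "\<forall>j\<in>I. Pr \<Psi> (\<phi> j) > 0" and "indistinguishable \<Psi> I \<phi>" and "j0 \<in> I"
    and "cinner \<eta> (contract_S (\<phi> j0) \<Psi>) = 0"
  shows "contract_E \<eta> \<Psi> = (\<lambda>_. 0)"
proof (rule eq_0_if_in_span_orthogonal)
  show "contract_E \<eta> \<Psi> = (\<lambda>i. \<Sum>j\<in>I. cinner \<eta> (\<chi> j) * \<phi> j i)"
    by (subst assms(1)) (rule contract_E_sum_tensor)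
  show "\<forall>j\<in>I. cinner (\<phi> j) (contract_E \<eta> \<Psi>) = 0"
  proof
    fix j assume "j \<in> I"
    have "cinner (\<phi> j) (contract_E \<eta> \<Psi>) = cinner \<eta> (contract_S (\<phi> j) \<Psi>)"
      by (metis cinner_tensor_eq_cinner_contract_E cinner_tensor_eq_cinner_contract_S)
    also have "\<dots> = 0"
      using \<open>j \<in> I\<close> assms(2)
      by (intro indistinguishable_orthogonal_contract_S[OF assms(3,4) _ _ assms(5)]) auto
    finally show "cinner (\<phi> j) (contract_E \<eta> \<Psi>) = 0" .
  qed
qed

theorem theorem9:
  fixes \<Psi> :: "'a::finite \<times> 'b::finite \<Rightarrow> complex"
    and \<phi> :: "'i \<Rightarrow> 'a \<Rightarrow> complex"
    and I :: "'i set"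
  assumes "finite I"
    and "unit_vec \<Psi>"
    and "\<forall>j\<in>I. unit_vec (\<phi> j)"
    and "\<exists>\<chi>::'i \<Rightarrow> 'b \<Rightarrow> complex. \<Psi> = (\<lambda>x. \<Sum>j\<in>I. tensor (\<phi> j) (\<chi> j) x)"
    and "\<forall>j\<in>I. Pr \<Psi> (\<phi> j) > 0"
    and "indistinguishable \<Psi> I \<phi>"
  shows "\<exists>(\<psi>::'i \<Rightarrow> complex) (\<Lambda>::'b \<Rightarrow> complex).
           unit_vec (\<lambda>i. \<Sum>s\<in>I. \<psi> s * \<phi> s i) \<and> unit_vec \<Lambda> \<and>
           \<Psi> = tensor (\<lambda>i. \<Sum>s\<in>I. \<psi> s * \<phi> s i) \<Lambda> \<and>
           rho_S \<Psi> = ketbra (\<lambda>i. \<Sum>s\<in>I. \<psi> s * \<phi> s i) (\<lambda>i. \<Sum>s\<in>I. \<psi> s * \<phi> s i)"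
proof -
  obtain \<chi> where \<Psi>_eq: "\<Psi> = (\<lambda>x. \<Sum>j\<in>I. tensor (\<phi> j) (\<chi> j) x)"
    using assms(4) by blast
  have "I \<noteq> {}"
    using assms(2) \<Psi>_eq by (auto simp: unit_vec_def cinner_def)
  then obtain j0 where j0: "j0 \<in> I" by blast
  define v where "v = contract_S (\<phi> j0) \<Psi>"
  have "v \<noteq> (\<lambda>_. 0)"
    using assms(5) j0 by (auto simp: v_def Pr_eq_cinner_contract_S cinner_def)
  define \<Lambda> where "\<Lambda> = cnormalize v"
  have \<Lambda>_unit: "unit_vec \<Lambda>"
    unfolding \<Lambda>_def using \<open>v \<noteq> (\<lambda>_. 0)\<close> by (rule unit_vec_cnormalize)
  have "\<forall>\<eta>. cinner \<eta> \<Lambda> = 0 \<longrightarrow> contract_E \<eta> \<Psi> = (\<lambda>_. 0)"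
    using contract_E_eq_0_if_orthogonal_contract_S[OF \<Psi>_eq assms(5,6) j0]
      cinner_cnormalize_right_eq_0_iff[OF \<open>v \<noteq> (\<lambda>_. 0)\<close>]
    unfolding \<Lambda>_def v_def by blast
  with \<Lambda>_unit have \<Psi>_tensor: "\<Psi> = tensor (contract_E \<Lambda> \<Psi>) \<Lambda>"
    by (rule tensor_contract_E_if_orthogonal)
  define \<psi> where "\<psi> s = cinner \<Lambda> (\<chi> s)" for s
  have "contract_E \<Lambda> \<Psi> = (\<lambda>i. \<Sum>s\<in>I. \<psi> s * \<phi> s i)"
    unfolding \<psi>_def by (subst \<Psi>_eq) (rule contract_E_sum_tensor)
  with \<Psi>_tensor have \<Psi>_factor: "\<Psi> = tensor (\<lambda>i. \<Sum>s\<in>I. \<psi> s * \<phi> s i) \<Lambda>"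
    by simp
  moreover have "unit_vec (\<lambda>i. \<Sum>s\<in>I. \<psi> s * \<phi> s i)"
    using assms(2) \<Psi>_factor unit_vec_tensor_iff[OF \<Lambda>_unit] by metis
  moreover have "rho_S \<Psi> = ketbra (\<lambda>i. \<Sum>s\<in>I. \<psi> s * \<phi> s i) (\<lambda>i. \<Sum>s\<in>I. \<psi> s * \<phi> s i)"
    using \<Psi>_factor rho_S_tensor[OF \<Lambda>_unit] by simp
  ultimately show ?thesis
    using \<Lambda>_unit by blast
qed

end
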